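(* Let $(t,\omega)\in[0,T]\times\Omega$ and $P\in\mathcal P(t,\omega)$. Then there exists $\varepsilon=\varepsilon(t,\omega,P)>0$ such that for every $\omega'\in\Omega$ with $\|\omega-\omega'\|_t\le\varepsilon$ we have $P\in\mathcal P(t,\omega')$ and $\deg(t,\omega',P)\ge\varepsilon$.
   Context: Fix $T>0$ and $d\ge1$. Let $\Omega=\{\omega\in C([0,T];\mathbb R^d):\omega_0=0\}$, $\|\omega\|_t:=\sup_{0\le s\le t}|\omega_s|$ ($|\cdot|$ Euclidean norm), $B$ the canonical process, $P_0$ the Wiener measure and $\mathbb F=(\mathcal F_t)_{0\le t\le T}$ the raw filtration generated by $B$. For $t\in[0,T]$ let $\Omega^t=\{\omega\in C([t,T];\mathbb R^d):\omega_t=0\}$ with canonical process $B^t$, Wiener measure $P^t_0$ and raw filtration $\mathbb F^t=(\mathcal F^t_u)_{t\le u\le T}$ (so $\Omega^0=\Omega$). For $0\le s\le t\le T$, $\omega\in\Omega^s$, $\tilde\omega\in\Omega^t$, the concatenation is $(\omega\otimes_t\tilde\omega)_u:=\omega_u\mathbf 1_{[s,t)}(u)+(\omega_t+\tilde\omega_u)\mathbf 1_{[t,T]}(u)$, $s\le u\le T$; for a function $\xi$ on $\Omega^s$, $\xi^{t,\omega}(\tilde\omega):=\xi(\omega\otimes_t\tilde\omega)$. The quadratic variation $\langle B^t\rangle$ is defined pathwise outside a set that is null for every local martingale measure, and $\hat a^t_u:=\limsup_{n\to\infty}n(\langle B^t\rangle_u-\langle B^t\rangle_{u-1/n})$ (componentwise).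 $\mathbb S^+_d$ ($\mathbb S^{>0}_d$) denotes the positive semidefinite (strictly positive definite) symmetric $d\times d$ matrices. $\overline{\mathcal P}^t_S$ is the set of laws $P^\alpha:=P^t_0\circ(X^\alpha)^{-1}$, $X^\alpha_u:=\int_t^u\alpha_r^{1/2}\,dB^t_r$ (Itô integral under $P^t_0$), where $\alpha$ ranges over $\mathbb F^t$-progressively measurable $\mathbb S^{>0}_d$-valued processes with $\int_t^T|\alpha_r|dr<\infty$ $P^t_0$-a.s.; under such $P^\alpha$, $B^t$ is a local martingale with quadratic variation density $\hat a^t$. $\mathbf D:\Omega\times[0,T]\to 2^{\mathbb S^+_d}$ is a process with closed values, progressively measurable in the sense that $\{(t,\omega):\mathbf D_t(\omega)\cap K\ne\emptyset\}$ is progressively measurable for each compact $K$. For $D\subseteq\mathbb S^+_d$, $\mathrm{Int}^\delta D:=\{x\in D: B_\delta(x)\subseteq D\}$ ($B_\delta(x)$ the open ball). Write $\mathbf D^{t,\omega}_s(\tilde\omega):=\mathbf D_s(\omega\otimes_t\tilde\omega)$. $\mathcal P(t,\omega)$ is the set of $P\in\overline{\mathcal P}^t_S$ for which there is $\delta>0$ with $\hat a^t_s(\tilde\omega)\in\mathrm{Int}^\delta\mathbf D^{t,\omega}_s(\tilde\omega)$ for $ds\times P$-a.e. $(s,\tilde\omega)\in[t,T]\times\Omega^t$; if $\delta^*$ is the supremum of such $\delta$, $\deg(t,\omega,P):=(\delta^*/2)\wedge1$. $\mathbf D$ is called uniformly continuous if for all $\delta>0$ and $(t,\omega)$ there is $\varepsilon=\varepsilon(t,\omega,\delta)>0$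 such that $\|\omega-\omega'\|_t\le\varepsilon$ implies $\mathrm{Int}^\delta\mathbf D^{t,\omega}_s(\tilde\omega)\subseteq\mathrm{Int}^\varepsilon\mathbf D^{t,\omega'}_s(\tilde\omega)$ for all $(s,\tilde\omega)\in[t,T]\times\Omega^t$. Standing assumption: $\mathbf D$ is uniformly continuous and $\mathcal P(t,\omega)\neq\emptyset$ for all $(t,\omega)$. *)

theory Defs
  imports "HOL-Analysis.Analysis" "HOL-Probability.Probability"
begin

definition Omega :: "real \<Rightarrow> real \<Rightarrow> (real \<Rightarrow> real^'d) set" where
  "Omega T t = {w. continuous_on {t..T} w \<and> w t = 0 \<and> (\<forall>u. u \<notin> {t..T} \<longrightarrow> w u = 0)}"

definition supnorm :: "real \<Rightarrow> (real \<Rightarrow> real^'d) \<Rightarrow> real" where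
  "supnorm t w = (SUP s\<in>{0..t}. norm (w s))"

definition concat :: "real \<Rightarrow> real \<Rightarrow> real \<Rightarrow> (real \<Rightarrow> real^'d) \<Rightarrow> (real \<Rightarrow> real^'d) \<Rightarrow> (real \<Rightarrow> real^'d)" where
  "concat T s t w w' = (\<lambda>u. if s \<le> u \<and> u < t then w u
                           else if t \<le> u \<and> u \<le> T then w t + w' u else 0)"

definition psd_sym :: "(real^'d^'d) set" where
  "psd_sym = {M. transpose M = M \<and> (\<forall>x. 0 \<le> x \<bullet> (M *v x))}"

text \<open>Int^delta D; the open ball is taken in the space of symmetric matrices.\<close>
definition IntD :: "real \<Rightarrow> (real^'d^'d) set \<Rightarrow> (real^'d^'d) set" where
  "IntD \<delta> D = {x\<in>D. {y. transpose y = y \<and> dist x y < \<delta>} \<subseteq> D}"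

definition Fraw :: "real \<Rightarrow> real \<Rightarrow> (real \<Rightarrow> real^'d) measure" where
  "Fraw T t = sigma (Omega T 0) {{w\<in>Omega T 0. w s \<in> A} | s A. s \<in> {0..t} \<and> A \<in> sets borel}"

definition progressive_sv ::
  "real \<Rightarrow> (real \<Rightarrow> (real \<Rightarrow> real^'d) \<Rightarrow> (real^'d^'d) set) \<Rightarrow> bool" where
  "progressive_sv T D = (\<forall>K. compact K \<longrightarrow> (\<forall>t\<in>{0..T}.
      {(s,w). s \<in> {0..t} \<and> w \<in> Omega T 0 \<and> D s w \<inter> K \<noteq> {}}
        \<in> sets (restrict_space borel {0..t} \<Otimes>\<^sub>M Fraw T t)))"

definition admissible ::
  "real \<Rightarrow> (real \<Rightarrow> real \<Rightarrow> (real \<Rightarrow> real^'d) \<Rightarrow> real^'d^'d)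
   \<Rightarrow> (real \<Rightarrow> (real \<Rightarrow> real^'d) \<Rightarrow> (real^'d^'d) set)
   \<Rightarrow> real \<Rightarrow> (real \<Rightarrow> real^'d) \<Rightarrow> (real \<Rightarrow> real^'d) measure \<Rightarrow> real \<Rightarrow> bool" where
  "admissible T ahat D t w P \<delta> = (\<delta> > 0 \<and>
     (AE sw in (restrict_space lborel {t..T} \<Otimes>\<^sub>M P).
        ahat t (fst sw) (snd sw) \<in> IntD \<delta> (D (fst sw) (concat T 0 t w (snd sw)))))"

definition calP ::
  "real \<Rightarrow> (real \<Rightarrow> (real \<Rightarrow> real^'d) measure set)
   \<Rightarrow> (real \<Rightarrow> real \<Rightarrow> (real \<Rightarrow> real^'d) \<Rightarrow> real^'d^'d)
   \<Rightarrow> (real \<Rightarrow> (real \<Rightarrow> real^'d) \<Rightarrow> (real^'d^'d) set)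
   \<Rightarrow> real \<Rightarrow> (real \<Rightarrow> real^'d) \<Rightarrow> (real \<Rightarrow> real^'d) measure set" where
  "calP T PS ahat D t w = {P\<in>PS t. \<exists>\<delta>. admissible T ahat D t w P \<delta>}"

definition deg ::
  "real \<Rightarrow> (real \<Rightarrow> real \<Rightarrow> (real \<Rightarrow> real^'d) \<Rightarrow> real^'d^'d)
   \<Rightarrow> (real \<Rightarrow> (real \<Rightarrow> real^'d) \<Rightarrow> (real^'d^'d) set)
   \<Rightarrow> real \<Rightarrow> (real \<Rightarrow> real^'d) \<Rightarrow> (real \<Rightarrow> real^'d) measure \<Rightarrow> real" where
  "deg T ahat D t w P =
     real_of_ereal (min (Sup (ereal ` {\<delta>. admissible T ahat D t w P \<delta>}) / 2) 1)"

end

theory Submission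
  imports Defs
begin

text \<open>
  If \<open>P \<in> calP(t,w)\<close>, then the quadratic-variation density of \<open>P\<close> lies in
  \<open>IntD \<delta> (D\<^sup>t\<^sup>,\<^sup>w)\<close> almost everywhere for some \<open>\<delta> > 0\<close>.  Uniform continuity of \<open>D\<close>
  supplies \<open>\<epsilon>\<^sub>0 > 0\<close> such that for every \<open>w'\<close> that is \<open>\<epsilon>\<^sub>0\<close>-close to \<open>w\<close> up to
  time \<open>t\<close>, the set \<open>IntD \<delta> (D\<^sup>t\<^sup>,\<^sup>w)\<close> is contained in \<open>IntD \<epsilon>\<^sub>0 (D\<^sup>t\<^sup>,\<^sup>w\<^sup>')\<close>
  pointwise.
  Hence \<open>P\<close> is \<open>\<epsilon>\<^sub>0\<close>-admissible at \<open>(t,w')\<close>, so \<open>P \<in> calP(t,w')\<close> and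
  \<open>deg(t,w',P) \<ge> min (\<epsilon>\<^sub>0/2) 1\<close>; the radius \<open>\<epsilon> = min (\<epsilon>\<^sub>0/2) 1\<close> does the job.
\<close>

lemma admissible_transfer:
  assumes adm: "admissible T ahat D t w P \<delta>"
    and space_P: "space P = Omega T t"
    and \<epsilon>_pos: "\<epsilon> > 0"
    and incl: "\<And>r x. r \<in> {t..T} \<Longrightarrow> x \<in> Omega T t \<Longrightarrow>
               IntD \<delta> (D r (concat T 0 t w x)) \<subseteq> IntD \<epsilon> (D r (concat T 0 t w' x))"
  shows "admissible T ahat D t w' P \<epsilon>"
proof -
  let ?M = "restrict_space lborel {t..T} \<Otimes>\<^sub>M P"
  have "AE sw in ?M. ahat t (fst sw) (snd sw) \<in> IntD \<delta> (D (fst sw) (concat T 0 t w (snd sw)))"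
    using adm unfolding admissible_def by blast
  with AE_space have "AE sw in ?M. sw \<in> space ?M \<and>
      ahat t (fst sw) (snd sw) \<in> IntD \<delta> (D (fst sw) (concat T 0 t w (snd sw)))"
    by (rule AE_conjI)
  then have "AE sw in ?M. ahat t (fst sw) (snd sw) \<in> IntD \<epsilon> (D (fst sw) (concat T 0 t w' (snd sw)))"
  proof (rule eventually_mono, elim conjE)
    fix sw assume "sw \<in> space ?M"
      and mem: "ahat t (fst sw) (snd sw) \<in> IntD \<delta> (D (fst sw) (concat T 0 t w (snd sw)))"
    then have "fst sw \<in> {t..T}" "snd sw \<in> Omega T t"
      using space_P by (auto simp: space_pair_measure space_restrict_space)
    then show "ahat t (fst sw) (snd sw) \<in> IntD \<epsilon> (D (fst sw) (concat T 0 t w' (snd sw)))"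
      using incl mem by blast
  qed
  then show ?thesis
    using \<epsilon>_pos unfolding admissible_def by blast
qed

lemma deg_ge_admissible:
  assumes adm: "admissible T ahat D t w P \<delta>"
  shows "min (\<delta> / 2) 1 \<le> deg T ahat D t w P"
proof -
  define S where "S = Sup (ereal ` {\<delta>. admissible T ahat D t w P \<delta>}) / 2"
  have "ereal \<delta> \<le> Sup (ereal ` {\<delta>. admissible T ahat D t w P \<delta>})"
    using adm by (intro Sup_upper) auto
  then have "ereal \<delta> / 2 \<le> S"
    unfolding S_def by (rule ereal_divide_right_mono) simp
  moreover have "ereal \<delta> / 2 = ereal (\<delta> / 2)" by simp
  moreover have "ereal (min (\<delta> / 2) 1) \<le> ereal (\<delta> / 2)" by simp
  ultimately have "ereal (min (\<delta> / 2) 1) \<le> S" by (metis order_trans)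
  then have lower: "ereal (min (\<delta> / 2) 1) \<le> min S 1"
    by (simp add: min.coboundedI2)
  have "min S 1 \<le> 1" by (rule min.cobounded2)
  then have "min (\<delta> / 2) 1 \<le> real_of_ereal (min S 1)"
    using lower by (cases "min S 1") (auto simp del: ereal_min)
  then show ?thesis
    unfolding deg_def S_def .
qed

theorem lemma3p5:
  fixes T :: real
    and D :: "real \<Rightarrow> (real \<Rightarrow> real^'d) \<Rightarrow> (real^'d^'d) set"
    and PS :: "real \<Rightarrow> (real \<Rightarrow> real^'d) measure set"
    and ahat :: "real \<Rightarrow> real \<Rightarrow> (real \<Rightarrow> real^'d) \<Rightarrow> real^'d^'d"
    and t :: real and w :: "real \<Rightarrow> real^'d"
    and P :: "(real \<Rightarrow> real^'d) measure"
  assumes T_pos: "T > 0"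
    and PS_laws: "\<forall>s\<in>{0..T}. \<forall>Q\<in>PS s. prob_space Q \<and> space Q = Omega T s"
    and D_vals: "\<forall>s\<in>{0..T}. \<forall>v\<in>Omega T 0. closed (D s v) \<and> D s v \<subseteq> psd_sym"
    and D_prog: "progressive_sv T D"
    and D_unif: "\<forall>\<delta>>0. \<forall>s\<in>{0..T}. \<forall>v\<in>Omega T 0. \<exists>\<epsilon>>0. \<forall>v'\<in>Omega T 0.
                   supnorm s (\<lambda>u. v u - v' u) \<le> \<epsilon> \<longrightarrow>
                   (\<forall>r\<in>{s..T}. \<forall>x\<in>Omega T s.
                      IntD \<delta> (D r (concat T 0 s v x)) \<subseteq> IntD \<epsilon> (D r (concat T 0 s v' x)))"
    and nonempty: "\<forall>s\<in>{0..T}. \<forall>v\<in>Omega T 0. calP T PS ahat D s v \<noteq> {}"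
    and t_in: "t \<in> {0..T}"
    and w_in: "w \<in> Omega T 0"
    and P_in: "P \<in> calP T PS ahat D t w"
  shows "\<exists>\<epsilon>>0. \<forall>w'\<in>Omega T 0. supnorm t (\<lambda>u. w u - w' u) \<le> \<epsilon> \<longrightarrow>
           P \<in> calP T PS ahat D t w' \<and> deg T ahat D t w' P \<ge> \<epsilon>"
proof -
  from P_in obtain \<delta> where P_PS: "P \<in> PS t" and adm: "admissible T ahat D t w P \<delta>"
    unfolding calP_def by blast
  have space_P: "space P = Omega T t" using PS_laws t_in P_PS by blast
  obtain \<epsilon>\<^sub>0 where \<epsilon>\<^sub>0_pos: "\<epsilon>\<^sub>0 > 0" and unif: "\<forall>w'\<in>Omega T 0.
      supnorm t (\<lambda>u. w u - w' u) \<le> \<epsilon>\<^sub>0 \<longrightarrow> (\<forall>r\<in>{t..T}. \<forall>x\<in>Omega T t.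
        IntD \<delta> (D r (concat T 0 t w x)) \<subseteq> IntD \<epsilon>\<^sub>0 (D r (concat T 0 t w' x)))"
    using D_unif adm t_in w_in unfolding admissible_def by blast
  show ?thesis
  proof (intro exI[of _ "min (\<epsilon>\<^sub>0 / 2) 1"] conjI ballI impI)
    show "min (\<epsilon>\<^sub>0 / 2) 1 > 0" using \<epsilon>\<^sub>0_pos by simp
    fix w' assume "w' \<in> Omega T 0" and "supnorm t (\<lambda>u. w u - w' u) \<le> min (\<epsilon>\<^sub>0 / 2) 1"
    then have "\<forall>r\<in>{t..T}. \<forall>x\<in>Omega T t.
        IntD \<delta> (D r (concat T 0 t w x)) \<subseteq> IntD \<epsilon>\<^sub>0 (D r (concat T 0 t w' x))"
      using unif \<epsilon>\<^sub>0_pos by force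
    then have adm': "admissible T ahat D t w' P \<epsilon>\<^sub>0"
      using admissible_transfer[OF adm space_P \<epsilon>\<^sub>0_pos] by blast
    then show "P \<in> calP T PS ahat D t w'"
      using P_PS unfolding calP_def by blast
    show "min (\<epsilon>\<^sub>0 / 2) 1 \<le> deg T ahat D t w' P"
      using deg_ge_admissible[OF adm'] .
  qed
qed

end
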